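(* Let $(X,d)$ be a geodesic metric space such that the kernel $\exp(-\lambda\, d^2(x,y))$ is positive definite on $X$ for all $\lambda>0$. Then $X$ is contractible, and hence simply connected.
   Context: A geodesic metric space is a metric space in which any two points $x,y$ are joined by a path $\gamma\colon[0,L]\to X$ with $\gamma(0)=x$, $\gamma(L)=y$ and $d(\gamma(t),\gamma(t'))=|t-t'|$ for all $t,t'$. A positive definite kernel on $X$ (with its metric topology) is a continuous $k\colon X\times X\to\mathbb{R}$ with $\sum_{i,j}c_ic_jk(x_i,x_j)\ge0$ for all $n$, $x_1,\dots,x_n\in X$, $c_1,\dots,c_n\in\mathbb{R}$. *)

theory Defs
  imports "HOL-Analysis.Analysis"
begin

definition geodesic_space :: "'a::metric_space itself \<Rightarrow> bool" where
  "geodesic_space _ \<longleftrightarrow>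
     (\<forall>x y::'a. \<exists>L::real. \<exists>\<gamma>::real \<Rightarrow> 'a.
        L \<ge> 0 \<and> \<gamma> 0 = x \<and> \<gamma> L = y \<and>
        (\<forall>t\<in>{0..L}. \<forall>t'\<in>{0..L}. dist (\<gamma> t) (\<gamma> t') = \<bar>t - t'\<bar>))"

definition pos_def_kernel :: "('a::metric_space \<Rightarrow> 'a \<Rightarrow> real) \<Rightarrow> bool" where
  "pos_def_kernel k \<longleftrightarrow>
     continuous_on UNIV (\<lambda>p. k (fst p) (snd p)) \<and>
     (\<forall>(n::nat) (x::nat \<Rightarrow> 'a) (c::nat \<Rightarrow> real).
        (\<Sum>i<n. \<Sum>j<n. c i * c j * k (x i) (x j)) \<ge> 0)"

end

theory Submission imports Defs begin

text \<open>Letting \<open>\<lambda> \<rightarrow> 0\<close> in the positivity of the Gaussian kernels shows (Schoenberg) that \<open>d\<^sup>2\<close> is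
  conditionally negative definite. Testing this on four points yields Stewart's identity:
  if \<open>m\<close> divides a geodesic from \<open>x\<close> to \<open>y\<close> in the ratio \<open>s : 1 - s\<close>, then
  \<open>d(z,m)\<^sup>2 = (1-s) d(z,x)\<^sup>2 + s d(z,y)\<^sup>2 - s(1-s) d(x,y)\<^sup>2\<close> for every \<open>z\<close>, exactly as in a Hilbert space.
  Applying this twice shows that moving every point a fraction \<open>t\<close> of the way along a chosen geodesic
  from a base point \<open>p\<close> scales all distances by \<open>t\<close>. These maps form a continuous contraction of the
  space onto \<open>p\<close>.\<close>

definition conditionally_negative_definite :: "('a \<Rightarrow> 'a \<Rightarrow> real) \<Rightarrow> bool" where
  "conditionally_negative_definite k \<longleftrightarrow>
     (\<forall>(n::nat) (x::nat \<Rightarrow> 'a) (c::nat \<Rightarrow> real).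
        (\<Sum>i<n. c i) = 0 \<longrightarrow> (\<Sum>i<n. \<Sum>j<n. c i * c j * k (x i) (x j)) \<le> 0)"

lemma conditionally_negative_definite_if_pos_def_exp:
  fixes k :: "'a::metric_space \<Rightarrow> 'a \<Rightarrow> real"
  assumes pd: "\<And>l. l > 0 \<Longrightarrow> pos_def_kernel (\<lambda>x y. exp (- l * k x y))"
  shows "conditionally_negative_definite k"
  unfolding conditionally_negative_definite_def
proof (intro allI impI)
  fix n and x :: "nat \<Rightarrow> 'a" and c :: "nat \<Rightarrow> real"
  assume sum_c: "(\<Sum>i<n. c i) = 0"
  let ?F = "\<lambda>l. \<Sum>i<n. \<Sum>j<n. c i * c j * ((exp (- l * k (x i) (x j)) - 1) / l)"
  have lim: "(?F \<longlongrightarrow> (\<Sum>i<n. \<Sum>j<n. c i * c j * (- k (x i) (x j)))) (at_right 0)"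
  proof (intro tendsto_intros)
    fix i j
    have "((\<lambda>l. exp (- l * a)) has_real_derivative (- a)) (at 0)" for a :: real
      by (auto intro!: derivative_eq_intros)
    then have "((\<lambda>l. (exp (- l * a) - 1) / l) \<longlongrightarrow> - a) (at 0)" for a :: real
      unfolding DERIV_def[symmetric] has_field_derivative_iff by simp
    from tendsto_mono[OF at_le[OF subset_UNIV] this]
    show "((\<lambda>l. (exp (- l * k (x i) (x j)) - 1) / l) \<longlongrightarrow> - k (x i) (x j)) (at_right 0)" .
  qed
  have "eventually (\<lambda>l. ?F l \<ge> 0) (at_right 0)"
  proof (rule eventually_mono[OF eventually_at_right_less])
    fix l :: real assume l: "0 < l"
    have gram: "(\<Sum>i<n. \<Sum>j<n. c i * c j * exp (- l * k (x i) (x j))) \<ge> 0"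
      using pd[OF l] unfolding pos_def_kernel_def by blast
    have "(\<Sum>i<n. \<Sum>j<n. c i * c j) = 0"
      using sum_c by (simp add: sum_product[symmetric])
    moreover have "?F l = ((\<Sum>i<n. \<Sum>j<n. c i * c j * exp (- l * k (x i) (x j)))
                              - (\<Sum>i<n. \<Sum>j<n. c i * c j)) / l"
      by (simp add: sum_divide_distrib sum_subtractf[symmetric] algebra_simps diff_divide_distrib)
    ultimately show "?F l \<ge> 0" using gram l by simp
  qed
  with lim have "0 \<le> (\<Sum>i<n. \<Sum>j<n. c i * c j * (- k (x i) (x j)))"
    by (intro tendsto_lowerbound) auto
  then show "(\<Sum>i<n. \<Sum>j<n. c i * c j * k (x i) (x j)) \<le> 0"
    by (simp add: sum_negf)
qed

lemma linear_coeff_zero_if_quadratic_nonpos: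
  fixes a b :: real
  assumes "\<And>e. a * e + b * e\<^sup>2 \<le> 0"
  shows "a = 0"
proof (rule ccontr)
  assume "a \<noteq> 0"
  define e where "e = a / (2 * (\<bar>b\<bar> + 1))"
  have "e * (2 * (\<bar>b\<bar> + 1)) = a"
    unfolding e_def by (simp add: add_pos_nonneg)
  then have "a * e + b * e\<^sup>2 = e\<^sup>2 * (2 * (\<bar>b\<bar> + 1) + b)"
    by (metis distrib_left mult.assoc mult.commute power2_eq_square)
  moreover have "e\<^sup>2 * (2 * (\<bar>b\<bar> + 1) + b) > 0"
  proof (rule mult_pos_pos)
    show "e\<^sup>2 > 0"
      using \<open>a \<noteq> 0\<close> unfolding e_def by (simp add: add_pos_nonneg)
    show "2 * (\<bar>b\<bar> + 1) + b > 0"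
      by (cases "b \<ge> 0") auto
  qed
  ultimately show False
    using assms[of e] by simp
qed

text \<open>The Gram form of \<open>d\<^sup>2\<close> on \<open>x, y, m, z\<close> with weights \<open>1 - s, s, -1 - e, e\<close> is a quadratic
  polynomial in \<open>e\<close> vanishing at \<open>0\<close>; being nonpositive, its linear coefficient vanishes.\<close>

lemma stewart_identity:
  fixes x y m z :: "'a::metric_space"
  assumes cnd: "conditionally_negative_definite (\<lambda>x y::'a. (dist x y)\<^sup>2)"
    and xm: "dist x m = s * dist x y" and my: "dist m y = (1 - s) * dist x y"
  shows "(dist z m)\<^sup>2 = (1 - s) * (dist z x)\<^sup>2 + s * (dist z y)\<^sup>2 - s * (1 - s) * (dist x y)\<^sup>2"
proof -
  define D A B C where "D = dist x y" "A = dist z x" "B = dist z y" "C = dist z m"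
  have "2 * ((1 - s) * A\<^sup>2 + s * B\<^sup>2 - C\<^sup>2 - s * (1 - s) * D\<^sup>2) * e + (- 2 * C\<^sup>2) * e\<^sup>2 \<le> 0" for e
  proof -
    define p :: "nat \<Rightarrow> 'a" where
      "p i = (if i = 0 then x else if i = 1 then y else if i = 2 then m else z)" for i
    define c :: "nat \<Rightarrow> real" where
      "c i = (if i = 0 then 1 - s else if i = 1 then s else if i = 2 then - 1 - e else e)" for i
    have "(\<Sum>i<4. c i) = 0"
      by (simp add: c_def eval_nat_numeral)
    with cnd have "(\<Sum>i<4. \<Sum>j<4. c i * c j * (dist (p i) (p j))\<^sup>2) \<le> 0"
      unfolding conditionally_negative_definite_def by blast
    also have "(\<Sum>i<4. \<Sum>j<4. c i * c j * (dist (p i) (p j))\<^sup>2) =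
       2 * ((1 - s) * s * D\<^sup>2 + (1 - s) * (- 1 - e) * (s * D)\<^sup>2 + s * (- 1 - e) * ((1 - s) * D)\<^sup>2
            + (1 - s) * e * A\<^sup>2 + s * e * B\<^sup>2 + (- 1 - e) * e * C\<^sup>2)"
    proof -
      have "dist y x = D" "dist m x = s * D" "dist y m = (1 - s) * D"
        "dist x z = A" "dist y z = B" "dist m z = C"
        "dist x y = D" "dist x m = s * D" "dist m y = (1 - s) * D"
        "dist z x = A" "dist z y = B" "dist z m = C"
        using xm my by (simp_all add: D_A_B_C_def dist_commute)
      then show ?thesis
        by (simp add: eval_nat_numeral p_def c_def)
    qed
    also have "\<dots> = 2 * ((1 - s) * A\<^sup>2 + s * B\<^sup>2 - C\<^sup>2 - s * (1 - s) * D\<^sup>2) * e + (- 2 * C\<^sup>2) * e\<^sup>2"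
      by (simp add: algebra_simps power2_eq_square)
    finally show ?thesis .
  qed
  then have "2 * ((1 - s) * A\<^sup>2 + s * B\<^sup>2 - C\<^sup>2 - s * (1 - s) * D\<^sup>2) = 0"
    by (rule linear_coeff_zero_if_quadratic_nonpos)
  then show ?thesis
    unfolding D_A_B_C_def by simp
qed

lemma geodesic_space_obtain_radial_homotopy:
  fixes p :: "'a::metric_space"
  assumes "geodesic_space TYPE('a)"
  obtains H :: "real \<Rightarrow> 'a \<Rightarrow> 'a"
  where "\<And>x. H 0 x = p" "\<And>x. H 1 x = x"
    "\<And>t s x. t \<in> {0..1} \<Longrightarrow> s \<in> {0..1} \<Longrightarrow> dist (H t x) (H s x) = \<bar>t - s\<bar> * dist p x"
proof -
  have "\<forall>x. \<exists>L::real. \<exists>\<gamma>::real \<Rightarrow> 'a. L \<ge> 0 \<and> \<gamma> 0 = p \<and> \<gamma> L = x \<and>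
          (\<forall>t\<in>{0..L}. \<forall>t'\<in>{0..L}. dist (\<gamma> t) (\<gamma> t') = \<bar>t - t'\<bar>)"
    using assms unfolding geodesic_space_def by blast
  then obtain L :: "'a \<Rightarrow> real" and \<gamma> :: "'a \<Rightarrow> real \<Rightarrow> 'a" where
    L: "\<And>x. L x \<ge> 0" and \<gamma>0: "\<And>x. \<gamma> x 0 = p" and \<gamma>L: "\<And>x. \<gamma> x (L x) = x" and
    \<gamma>_isometric: "\<And>x t t'. t \<in> {0..L x} \<Longrightarrow> t' \<in> {0..L x} \<Longrightarrow> dist (\<gamma> x t) (\<gamma> x t') = \<bar>t - t'\<bar>"
    by metis
  have "dist p x = L x" for x
    using \<gamma>_isometric[of 0 x "L x"] L[of x] by (simp add: \<gamma>0 \<gamma>L)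
  moreover have "t * L x \<in> {0..L x}" if "t \<in> {0..1}" for t x
    using that L[of x] by (auto simp: mult_left_le_one_le)
  ultimately have "dist (\<gamma> x (t * L x)) (\<gamma> x (s * L x)) = \<bar>t - s\<bar> * dist p x"
    if "t \<in> {0..1}" "s \<in> {0..1}" for t s x
    using \<gamma>_isometric that L[of x] by (simp add: left_diff_distrib[symmetric] abs_mult)
  with that[of "\<lambda>t x. \<gamma> x (t * L x)"] show thesis
    by (simp add: \<gamma>0 \<gamma>L)
qed

lemma radial_homotopy_scales_dist:
  fixes H :: "real \<Rightarrow> 'a::metric_space \<Rightarrow> 'a"
  assumes cnd: "conditionally_negative_definite (\<lambda>x y::'a. (dist x y)\<^sup>2)"
    and H0: "\<And>x. H 0 x = p" and H1: "\<And>x. H 1 x = x"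
    and H_dist: "\<And>t s x. t \<in> {0..1} \<Longrightarrow> s \<in> {0..1} \<Longrightarrow> dist (H t x) (H s x) = \<bar>t - s\<bar> * dist p x"
    and t: "t \<in> {0..1}"
  shows "dist (H t x) (H t y) = t * dist x y"
proof -
  have from_p: "dist p (H t z) = t * dist p z" and to_end: "dist (H t z) z = (1 - t) * dist p z" for z
    using H_dist[OF _ t, of 0 z] H_dist[OF t, of 1 z] t by (simp_all add: H0 H1)
  have "(dist (H t x) (H t y))\<^sup>2 = (1 - t) * (dist (H t x) p)\<^sup>2 + t * (dist (H t x) y)\<^sup>2
          - t * (1 - t) * (dist p y)\<^sup>2"
    by (rule stewart_identity[OF cnd from_p to_end])
  also have "(dist (H t x) y)\<^sup>2 = (1 - t) * (dist y p)\<^sup>2 + t * (dist y x)\<^sup>2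
          - t * (1 - t) * (dist p x)\<^sup>2"
    unfolding dist_commute[of "H t x"] by (rule stewart_identity[OF cnd from_p to_end])
  also have "dist (H t x) p = t * dist p x"
    using from_p by (simp add: dist_commute)
  finally have "(dist (H t x) (H t y))\<^sup>2 = (t * dist x y)\<^sup>2"
    by (simp add: dist_commute power_mult_distrib algebra_simps power2_eq_square)
  then show ?thesis
    using t by (simp add: power2_eq_iff_nonneg)
qed

lemma continuous_on_radial_homotopy:
  fixes H :: "real \<Rightarrow> 'a::metric_space \<Rightarrow> 'a"
  assumes H_dist: "\<And>t s x. t \<in> {0..1} \<Longrightarrow> s \<in> {0..1} \<Longrightarrow> dist (H t x) (H s x) = \<bar>t - s\<bar> * dist p x"
    and H_nonexpansive: "\<And>t x y. t \<in> {0..1} \<Longrightarrow> dist (H t x) (H t y) \<le> dist x y"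
  shows "continuous_on ({0..1} \<times> UNIV) (\<lambda>z. H (fst z) (snd z))"
  unfolding continuous_on_iff
proof (intro ballI allI impI)
  fix z0 :: "real \<times> 'a" and e :: real
  assume "z0 \<in> {0..1} \<times> UNIV" "e > 0"
  obtain t0 x0 where z0: "z0 = (t0, x0)" "t0 \<in> {0..1}"
    using \<open>z0 \<in> _\<close> by fastforce
  define K where "K = 1 + dist p x0"
  have "K > 0"
    by (simp add: K_def add_pos_nonneg)
  have "dist (H t x) (H t0 x0) \<le> dist (t, x) z0 * K" if "t \<in> {0..1}" for t x
  proof -
    have "dist (H t x) (H t0 x0) \<le> dist (H t x) (H t x0) + dist (H t x0) (H t0 x0)"
      by (rule dist_triangle)
    also have "\<dots> \<le> dist x x0 + \<bar>t - t0\<bar> * dist p x0"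
      using H_nonexpansive[OF that] H_dist[OF that z0(2)] by simp
    also have "\<dots> \<le> dist (t, x) z0 + dist (t, x) z0 * dist p x0"
      using dist_snd_le[of "(t, x)" z0] dist_fst_le[of "(t, x)" z0]
      by (intro add_mono mult_right_mono) (auto simp: z0 dist_real_def)
    finally show ?thesis
      by (simp add: K_def algebra_simps)
  qed
  moreover have "dist z z0 * K < e" if "dist z z0 < e / K" for z
    using that \<open>K > 0\<close> by (simp add: pos_less_divide_eq)
  ultimately have "dist (H (fst z) (snd z)) (H (fst z0) (snd z0)) < e"
    if "z \<in> {0..1} \<times> UNIV" "dist z z0 < e / K" for z
    using that by (metis (no_types, lifting) SigmaE fst_conv snd_conv z0(1) le_less_trans)
  with \<open>e > 0\<close> \<open>K > 0\<close> show "\<exists>d>0. \<forall>z\<in>{0..1} \<times> UNIV. dist z z0 < d \<longrightarrow>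
      dist (H (fst z) (snd z)) (H (fst z0) (snd z0)) < e"
    by (intro exI[of _ "e / K"]) auto
qed

lemma contractible_UNIV_if_homotopy:
  fixes H :: "real \<Rightarrow> 'a::topological_space \<Rightarrow> 'a"
  assumes "continuous_on ({0..1} \<times> UNIV) (\<lambda>z. H (fst z) (snd z))"
    and "\<And>x. H 0 x = p" and "\<And>x. H 1 x = x"
  shows "contractible (UNIV :: 'a set)"
proof -
  have "continuous_on ({0..1} \<times> UNIV) (\<lambda>z. H (1 - fst z) (snd z))"
    using continuous_on_compose2[OF assms(1), of "{0..1} \<times> UNIV" "\<lambda>z. (1 - fst z, snd z)"]
    by (force intro: continuous_intros)
  moreover have "prod_topology (top_of_set {0..1::real}) (euclidean :: 'a topology)
      = top_of_set ({0..1} \<times> UNIV)"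
    using subtopology_Times[of euclidean euclidean "{0..1::real}" "UNIV :: 'a set"] by simp
  ultimately show ?thesis
    unfolding contractible_def using assms(2,3)
    by (auto simp: homotopic_with intro!: exI[of _ p] exI[of _ "\<lambda>z. H (1 - fst z) (snd z)"])
qed

text \<open>The library version of this fact is stated for normed vector spaces only.\<close>

lemma contractible_imp_simply_connected_topological:
  fixes S :: "'a::topological_space set"
  assumes "contractible S"
  shows "simply_connected S"
proof -
  obtain a where "homotopic_with_canon (\<lambda>x. True) S S id (\<lambda>x. a)"
    using assms by (auto simp: contractible_def)
  then obtain h where h: "continuous_on ({0..1::real} \<times> S) h" "h \<in> {0..1} \<times> S \<rightarrow> S"
    "\<forall>x. h (0, x) = x" "\<forall>x. h (1, x) = a"
    by (auto simp: homotopic_with_def)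
  have "homotopic_loops S g (\<lambda>_. a)"
    if g: "path g" "path_image g \<subseteq> S" "pathfinish g = pathstart g" for g
    unfolding homotopic_loops
  proof (intro exI[of _ "\<lambda>z. h (fst z, g (snd z))"] conjI ballI allI)
    have "continuous_on ({0..1} \<times> {0..1}) (\<lambda>z::real \<times> real. (fst z, g (snd z)))"
      using g(1) unfolding path_def
      by (intro continuous_on_Pair continuous_on_fst continuous_on_compose2[OF _ continuous_on_snd]) auto
    moreover have "(\<lambda>z. (fst z, g (snd z))) ` ({0..1} \<times> {0..1}) \<subseteq> {0..1} \<times> S"
      using g(2) unfolding path_image_def by (auto simp: image_subset_iff)
    ultimately show "continuous_on ({0..1} \<times> {0..1}) (\<lambda>z. h (fst z, g (snd z)))"
      using continuous_on_compose2[OF h(1)] by simp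
    show "(\<lambda>z. h (fst z, g (snd z))) \<in> {0..1} \<times> {0..1} \<rightarrow> S"
      using g(2) h(2) unfolding path_image_def by (auto simp: image_subset_iff Pi_iff)
    show "pathfinish ((\<lambda>z. h (fst z, g (snd z))) \<circ> Pair t)
        = pathstart ((\<lambda>z. h (fst z, g (snd z))) \<circ> Pair t)" for t
      using g(3) by (simp add: pathfinish_def pathstart_def)
  qed (simp_all add: h(3,4))
  then show ?thesis
    unfolding simply_connected_def by (meson homotopic_loops_sym homotopic_loops_trans)
qed

theorem mainTheorem6:
  assumes "geodesic_space TYPE('a::metric_space)"
    and "\<And>l::real. l > 0 \<Longrightarrow>
           pos_def_kernel (\<lambda>x y::'a. exp (- l * (dist x y)\<^sup>2))"
  shows "contractible (UNIV::'a set) \<and> simply_connected (UNIV::'a set)"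
proof -
  have cnd: "conditionally_negative_definite (\<lambda>x y::'a. (dist x y)\<^sup>2)"
    using assms(2) by (rule conditionally_negative_definite_if_pos_def_exp)
  fix p :: 'a
  obtain H :: "real \<Rightarrow> 'a \<Rightarrow> 'a" where H0: "\<And>x. H 0 x = p" and H1: "\<And>x. H 1 x = x"
    and H_dist: "\<And>t s x. t \<in> {0..1} \<Longrightarrow> s \<in> {0..1} \<Longrightarrow> dist (H t x) (H s x) = \<bar>t - s\<bar> * dist p x"
    using geodesic_space_obtain_radial_homotopy[OF assms(1)] by blast
  have "dist (H t x) (H t y) \<le> dist x y" if "t \<in> {0..1}" for t x y
    using radial_homotopy_scales_dist[OF cnd H0 H1 H_dist that] that
    by (simp add: mult_left_le_one_le)
  then have "continuous_on ({0..1} \<times> UNIV) (\<lambda>z. H (fst z) (snd z))"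
    using H_dist by (rule continuous_on_radial_homotopy[rotated])
  then have "contractible (UNIV :: 'a set)"
    using H0 H1 by (rule contractible_UNIV_if_homotopy)
  then show ?thesis
    using contractible_imp_simply_connected_topological by blast
qed

end
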